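(* Consider the disclosure model described in the context, and suppose $\pi(\theta,e)=\tilde\pi(\theta,e,e)=\pi_0(e)-\theta\,(ae+b)$ for some function $\pi_0$ and constants $a,b\in\mathbb{R}$ with $a>0$ (respectively $a<0$). Suppose $f$ is continuously differentiable on the interior of $\Theta$. Suppose further that there exists $\theta_\blacktriangle\in\Theta$ such that: (i) $\underline{\mathbf e}(\theta)=\bar e$ for all $\theta\in[\underline\theta,\theta_\blacktriangle]$ (respectively for all $\theta\in[\theta_\blacktriangle,\bar\theta]$); and (ii) $f$ is nonincreasing on $[\theta_\blacktriangle,\bar\theta]$ (respectively nondecreasing on $[\underline\theta,\theta_\blacktriangle]$). Then full disclosure is the only efficient policy: the Pareto frontier of $\{(\Gamma(d),\Pi(d)):d\in\mathcal{D}\}$ consists of the single point $(\Gamma(d_F),\Pi(d_F))$, where $d_F$ is a full-disclosure policy.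
   Context: Emissions lie in $E=[0,\bar e]$ with $\bar e>0$. The firm's type $\theta\in\Theta=[\underline\theta,\bar\theta]$ is private information with density $f=F'$, which is continuous on $\Theta$. The firm's profit is $\tilde\pi(\theta,e,\tilde e)$ with actual emission $e$ and market-perceived emission $\tilde e$; it is strictly increasing in $e$ and strictly decreasing in $\tilde e$. Standing assumptions: $\tilde\pi$ is continuous on $\Theta\times E\times E$ and $C^2$ on its interior; $\pi(\theta,e):=\tilde\pi(\theta,e,e)$ is strictly concave in $e$; and $\pi(\theta,0)<\pi(\theta,\bar e)$ for all $\theta$. $\underline{\mathbf e}(\theta):=\min\{e\in E:\pi(\theta,e)\ge\pi(\theta,\bar e)\}$ and $\hat{\mathbf e}(\theta):=\arg\max_{e\in E}\pi(\theta,e)$. A disclosure policy is a function $d:E\to E$ (a partition of $E$ into level sets). An emission $e$ is belief-compatible under $d$ if $e\ge e'$ whenever $d(e')=d(e)$; $\tilde E_d$ is the set of such levels. The type-$\theta$ firm chooses $e\in\tilde E_d$ maximizing $\pi(\theta,e)$. $\mathcal{D}$ is the set of policies for which the maximum is attained for every type. For $d\in\mathcal{D}$, $\pi_d(\theta)=\max_{e\in\tilde E_d}\pi(\theta,e)$, and $\gamma_d(\theta)$ is the lowest maximizer. Further, $\Pi(d)=\int_\Theta\pi_d\,dF$ and $\Gamma(d)=\int_\Theta\gamma_d\,dF$. A policy $d\in\mathcal{D}$ is Pareto efficient if there is no $d'\in\mathcal{D}$ with $\Pi(d')\ge\Pi(d)$ and $\Gamma(d')\le\Gamma(d)$, at least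 one strict. A full-disclosure policy is a policy in which every $e\in\hat{\mathbf e}(\Theta)$ is alone in its cell ($d(e')=d(e)$ implies $e'=e$), so each type can attain $\max_E\pi(\theta,\cdot)$. *)

theory Defs
  imports "HOL-Analysis.Analysis"
begin

(* Emission set E = [0, ebar]; type set Theta = [tlo, thi]. *)

definition C2_on :: "('a::euclidean_space) set \<Rightarrow> ('a \<Rightarrow> real) \<Rightarrow> bool" where
  "C2_on S g \<longleftrightarrow>
     (\<exists>(D :: 'a \<Rightarrow> ('a \<Rightarrow>\<^sub>L real)) (D2 :: 'a \<Rightarrow> ('a \<Rightarrow>\<^sub>L ('a \<Rightarrow>\<^sub>L real))).
        (\<forall>x\<in>S. (g has_derivative blinfun_apply (D x)) (at x)) \<and>
        (\<forall>x\<in>S. (D has_derivative blinfun_apply (D2 x)) (at x)) \<and>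
        continuous_on S D2)"

definition pi_of :: "(real \<Rightarrow> real \<Rightarrow> real \<Rightarrow> real) \<Rightarrow> real \<Rightarrow> real \<Rightarrow> real" where
  "pi_of tpi \<theta> e = tpi \<theta> e e"

definition e_low :: "(real \<Rightarrow> real \<Rightarrow> real \<Rightarrow> real) \<Rightarrow> real \<Rightarrow> real \<Rightarrow> real" where
  "e_low tpi ebar \<theta> = (LEAST e. e \<in> {0..ebar} \<and> pi_of tpi \<theta> e \<ge> pi_of tpi \<theta> ebar)"

definition belief_compatible :: "real \<Rightarrow> (real \<Rightarrow> real) \<Rightarrow> real set" where
  "belief_compatible ebar d = {e \<in> {0..ebar}. \<forall>e'\<in>{0..ebar}. d e' = d e \<longrightarrow> e' \<le> e}"

definition policies :: "(real \<Rightarrow> real \<Rightarrow> real \<Rightarrow> real) \<Rightarrow> real \<Rightarrow> real \<Rightarrow> real \<Rightarrow> (real \<Rightarrow> real) set" where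
  "policies tpi tlo thi ebar =
     {d. d ` {0..ebar} \<subseteq> {0..ebar} \<and>
         (\<forall>\<theta>\<in>{tlo..thi}. \<exists>e\<in>belief_compatible ebar d.
             \<forall>e'\<in>belief_compatible ebar d. pi_of tpi \<theta> e' \<le> pi_of tpi \<theta> e)}"

definition pi_d :: "(real \<Rightarrow> real \<Rightarrow> real \<Rightarrow> real) \<Rightarrow> real \<Rightarrow> (real \<Rightarrow> real) \<Rightarrow> real \<Rightarrow> real" where
  "pi_d tpi ebar d \<theta> = Sup (pi_of tpi \<theta> ` belief_compatible ebar d)"

definition gamma_d :: "(real \<Rightarrow> real \<Rightarrow> real \<Rightarrow> real) \<Rightarrow> real \<Rightarrow> (real \<Rightarrow> real) \<Rightarrow> real \<Rightarrow> real" where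
  "gamma_d tpi ebar d \<theta> =
     (LEAST e. e \<in> belief_compatible ebar d \<and> pi_of tpi \<theta> e = pi_d tpi ebar d \<theta>)"

definition Profit :: "(real \<Rightarrow> real \<Rightarrow> real \<Rightarrow> real) \<Rightarrow> real \<Rightarrow> real \<Rightarrow> real \<Rightarrow> (real \<Rightarrow> real) \<Rightarrow> (real \<Rightarrow> real) \<Rightarrow> real" where
  "Profit tpi tlo thi ebar f d = integral {tlo..thi} (\<lambda>\<theta>. pi_d tpi ebar d \<theta> * f \<theta>)"

definition Emission :: "(real \<Rightarrow> real \<Rightarrow> real \<Rightarrow> real) \<Rightarrow> real \<Rightarrow> real \<Rightarrow> real \<Rightarrow> (real \<Rightarrow> real) \<Rightarrow> (real \<Rightarrow> real) \<Rightarrow> real" where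
  "Emission tpi tlo thi ebar f d = integral {tlo..thi} (\<lambda>\<theta>. gamma_d tpi ebar d \<theta> * f \<theta>)"

definition pareto_efficient :: "(real \<Rightarrow> real \<Rightarrow> real \<Rightarrow> real) \<Rightarrow> real \<Rightarrow> real \<Rightarrow> real \<Rightarrow> (real \<Rightarrow> real) \<Rightarrow> (real \<Rightarrow> real) \<Rightarrow> bool" where
  "pareto_efficient tpi tlo thi ebar f d \<longleftrightarrow>
     d \<in> policies tpi tlo thi ebar \<and>
     \<not> (\<exists>d'\<in>policies tpi tlo thi ebar.
          Profit tpi tlo thi ebar f d' \<ge> Profit tpi tlo thi ebar f d \<and>
          Emission tpi tlo thi ebar f d' \<le> Emission tpi tlo thi ebar f d \<and>
          (Profit tpi tlo thi ebar f d' > Profit tpi tlo thi ebar f d \<or>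
           Emission tpi tlo thi ebar f d' < Emission tpi tlo thi ebar f d))"

definition full_disclosure :: "(real \<Rightarrow> real \<Rightarrow> real \<Rightarrow> real) \<Rightarrow> real \<Rightarrow> real \<Rightarrow> real \<Rightarrow> (real \<Rightarrow> real) \<Rightarrow> bool" where
  "full_disclosure tpi tlo thi ebar d \<longleftrightarrow>
     d ` {0..ebar} \<subseteq> {0..ebar} \<and>
     (\<forall>\<theta>\<in>{tlo..thi}. \<forall>e\<in>{0..ebar}.
        (\<forall>e''\<in>{0..ebar}. pi_of tpi \<theta> e'' \<le> pi_of tpi \<theta> e) \<longrightarrow>
        (\<forall>e'\<in>{0..ebar}. d e' = d e \<longrightarrow> e' = e))"

end

theory Submission
  imports Defs
begin

(* Since pi(theta, e) is affine in theta, type y can imitate the choice gamma_d x of type x and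
   earn exactly (y - x) (a gamma_d x + b) less than x does.  This envelope inequality makes gamma_d
   monotone and gives the profit gap D = pi_{d_F} - pi_d >= 0 the bound
   D y - D x <= a (y - x) (gamma_d x - gamma_{d_F} y).  Full disclosure maximises pi_d pointwise,
   hence expected profit.  For a > 0 every policy induces ebar below t_tri, so D vanishes at t_tri;
   above t_tri the density is nonincreasing, and integrating D' f by parts gives
   E[gamma_{d_F}] <= E[gamma_d].  As D is only Lipschitz, this integration by parts is carried out
   as a summation by parts on uniform Riemann sums.  The case a < 0 is the mirror image under
   theta |-> -theta.  So d_F weakly dominates every policy and is the whole Pareto frontier. *)

lemma integrable_on_antimono_on:
  fixes f :: "real \<Rightarrow> real"
  assumes "antimono_on {a..b} f"
  shows "f integrable_on {a..b}"
proof -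
  have "mono_on {a..b} (\<lambda>x. - f x)"
    using assms by (auto intro!: monotone_onI dest: monotone_onD)
  then show ?thesis
    using integrable_neg[OF integrable_on_mono_on] by fastforce
qed

lemma antimono_on_mult_nonneg:
  fixes f g :: "real \<Rightarrow> real"
  assumes "antimono_on S f" "antimono_on S g"
    and "\<And>x. x \<in> S \<Longrightarrow> 0 \<le> f x" "\<And>x. x \<in> S \<Longrightarrow> 0 \<le> g x"
  shows "antimono_on S (\<lambda>x. f x * g x)"
  using assms by (auto intro!: monotone_onI mult_mono dest: monotone_onD)

lemma antimono_integral_bounds:
  fixes f :: "real \<Rightarrow> real"
  assumes "antimono_on {u..v} f" "u \<le> v"
  shows "(v - u) * f v \<le> integral {u..v} f" "integral {u..v} f \<le> (v - u) * f u"
proof -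
  have f_int: "f integrable_on {u..v}"
    by (rule integrable_on_antimono_on[OF assms(1)])
  have "integral {u..v} (\<lambda>_. f v) \<le> integral {u..v} f"
    using assms by (intro integral_le f_int) (auto simp: monotone_on_def)
  then show "(v - u) * f v \<le> integral {u..v} f"
    using assms(2) by simp
  have "integral {u..v} f \<le> integral {u..v} (\<lambda>_. f u)"
    using assms by (intro integral_le f_int) (auto simp: monotone_on_def)
  then show "integral {u..v} f \<le> (v - u) * f u"
    using assms(2) by simp
qed

lemma antimono_integral_grid_bounds:
  fixes f :: "real \<Rightarrow> real"
  assumes "antimono_on {p..p + real n * h} f" "0 \<le> h"
  shows "h * (\<Sum>k<n. f (p + real (Suc k) * h)) \<le> integral {p..p + real n * h} f
       \<and> integral {p..p + real n * h} f \<le> h * (\<Sum>k<n. f (p + real k * h))"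
  using assms(1)
proof (induction n)
  case 0
  then show ?case by simp
next
  case (Suc n)
  define x where "x k = p + real k * h" for k
  have x_mono: "x i \<le> x j" if "i \<le> j" for i j
    using that \<open>0 \<le> h\<close> by (simp add: x_def mult_right_mono)
  have f_antimono: "antimono_on {p..x (Suc n)} f"
    using Suc.prems by (simp add: x_def)
  have IH: "h * (\<Sum>k<n. f (x (Suc k))) \<le> integral {p..x n} f
       \<and> integral {p..x n} f \<le> h * (\<Sum>k<n. f (x k))"
    using Suc.IH monotone_on_subset[OF f_antimono] x_mono[of n "Suc n"]
    by (simp add: x_def)
  have piece: "h * f (x (Suc n)) \<le> integral {x n..x (Suc n)} f
       \<and> integral {x n..x (Suc n)} f \<le> h * f (x n)"
    using antimono_integral_bounds[OF monotone_on_subset[OF f_antimono], of "x n" "x (Suc n)"]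
      x_mono[of 0 n] x_mono[of n "Suc n"]
    by (auto simp: x_def algebra_simps)
  have "integral {p..x (Suc n)} f = integral {p..x n} f + integral {x n..x (Suc n)} f"
    using x_mono[of 0 n] x_mono[of n "Suc n"] x_def[of 0]
    by (intro Henstock_Kurzweil_Integration.integral_combine[symmetric]
        integrable_on_antimono_on f_antimono) auto
  with IH piece have "h * (\<Sum>k<Suc n. f (x (Suc k))) \<le> integral {p..x (Suc n)} f
       \<and> integral {p..x (Suc n)} f \<le> h * (\<Sum>k<Suc n. f (x k))"
    by (simp add: distrib_left)
  then show ?case
    by (simp add: x_def)
qed

lemma sum_antimono_weighted_increments_nonneg:
  fixes F D :: "nat \<Rightarrow> real"
  assumes "antimono_on {..n} F" "\<And>k. k \<le> n \<Longrightarrow> 0 \<le> F k"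
    and "D 0 = 0" "\<And>k. k \<le> n \<Longrightarrow> 0 \<le> D k"
  shows "0 \<le> (\<Sum>k<n. F (Suc k) * (D (Suc k) - D k))"
proof -
  have "F m * D m \<le> (\<Sum>k<m. F (Suc k) * (D (Suc k) - D k))" if "m \<le> n" for m
    using that
  proof (induction m)
    case 0
    then show ?case using \<open>D 0 = 0\<close> by simp
  next
    case (Suc m)
    have "F (Suc m) * D m \<le> F m * D m"
      using Suc.prems assms(1,4) by (intro mult_right_mono) (auto simp: monotone_on_def)
    with Suc show ?case by (simp add: algebra_simps)
  qed
  from this[of n] show ?thesis
    using assms(2,4) by (meson order_trans mult_nonneg_nonneg order_refl)
qed

lemma sum_envelope_products_lower_bound:
  fixes F G E D :: "nat \<Rightarrow> real"
  assumes "c > 0"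
    and F: "antimono_on {..n} F" "\<And>k. k \<le> n \<Longrightarrow> 0 \<le> F k"
    and G: "antimono_on {..n} G" and E: "\<And>k. k \<le> n \<Longrightarrow> 0 \<le> E k"
    and D: "D 0 = 0" "\<And>k. k \<le> n \<Longrightarrow> 0 \<le> D k"
    and envelope: "\<And>k. k < n \<Longrightarrow> D (Suc k) - D k \<le> c * (G k - E (Suc k))"
  shows "- F 0 * (G 0 - G n + E 0) \<le> (\<Sum>k<n. G (Suc k) * F (Suc k) - E k * F k)"
proof -
  have "0 \<le> (\<Sum>k<n. F (Suc k) * (D (Suc k) - D k))"
    using F D by (rule sum_antimono_weighted_increments_nonneg)
  also have "\<dots> \<le> (\<Sum>k<n. c * (F (Suc k) * (G k - E (Suc k))))"
  proof (intro sum_mono)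
    fix k assume "k \<in> {..<n}"
    then have "F (Suc k) * (D (Suc k) - D k) \<le> F (Suc k) * (c * (G k - E (Suc k)))"
      using F(2) envelope by (intro mult_left_mono) auto
    then show "F (Suc k) * (D (Suc k) - D k) \<le> c * (F (Suc k) * (G k - E (Suc k)))"
      by (simp add: mult.left_commute)
  qed
  also have "\<dots> = c * (\<Sum>k<n. F (Suc k) * (G k - E (Suc k)))"
    by (simp add: sum_distrib_left)
  finally have gain: "0 \<le> (\<Sum>k<n. F (Suc k) * (G k - E (Suc k)))"
    using \<open>c > 0\<close> by (simp add: zero_le_mult_iff)
  have "(\<Sum>k<n. F (Suc k) * (G k - G (Suc k))) \<le> (\<Sum>k<n. F 0 * (G k - G (Suc k)))"
    using F G by (intro sum_mono mult_right_mono) (auto simp: monotone_on_def)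
  also have "\<dots> = F 0 * (G 0 - G n)"
    by (simp add: sum_distrib_left[symmetric] sum_lessThan_telescope')
  finally have drift: "(\<Sum>k<n. F (Suc k) * (G k - G (Suc k))) \<le> F 0 * (G 0 - G n)" .
  have "(\<Sum>k<n. G (Suc k) * F (Suc k) - E k * F k)
      = (\<Sum>k<n. F (Suc k) * (G k - E (Suc k))) - (\<Sum>k<n. F (Suc k) * (G k - G (Suc k)))
        + (\<Sum>k<n. E (Suc k) * F (Suc k) - E k * F k)"
    by (simp add: sum_subtractf[symmetric] sum.distrib[symmetric] algebra_simps)
  also have "(\<Sum>k<n. E (Suc k) * F (Suc k) - E k * F k) = E n * F n - E 0 * F 0"
    by (rule sum_lessThan_telescope)
  finally show ?thesis
    using gain drift mult_nonneg_nonneg[OF E[of n] F(2)[of n]] by (simp add: algebra_simps)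
qed

context
  fixes F G E D :: "real \<Rightarrow> real" and p q c :: real
  assumes "p \<le> q" "c > 0"
    and F: "antimono_on {p..q} F" "\<And>x. x \<in> {p..q} \<Longrightarrow> 0 \<le> F x"
    and G: "antimono_on {p..q} G" "\<And>x. x \<in> {p..q} \<Longrightarrow> 0 \<le> G x"
    and E: "antimono_on {p..q} E" "\<And>x. x \<in> {p..q} \<Longrightarrow> 0 \<le> E x"
    and D: "D p = 0" "\<And>x. x \<in> {p..q} \<Longrightarrow> 0 \<le> D x"
    and envelope: "\<And>x y. x \<in> {p..q} \<Longrightarrow> y \<in> {p..q} \<Longrightarrow> x \<le> y \<Longrightarrow>
                     D y - D x \<le> c * (y - x) * (G x - E y)"
begin

lemma integral_envelope_gap_le:
  assumes "n > 0"
  shows "integral {p..q} (\<lambda>x. E x * F x) - integral {p..q} (\<lambda>x. G x * F x)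
           \<le> (q - p) * (F p * (G p - G q + E p)) / real n"
proof (cases "p = q")
  case True
  then show ?thesis by simp
next
  case False
  define h where "h = (q - p) / n"
  define x where "x k = p + real k * h" for k
  have "h > 0"
    using \<open>p \<le> q\<close> False \<open>n > 0\<close> by (simp add: h_def)
  have x_0: "x 0 = p" and x_n: "x n = q"
    using \<open>n > 0\<close> by (simp_all add: x_def h_def)
  have x_mono: "x i \<le> x j" if "i \<le> j" for i j
    using that \<open>h > 0\<close> by (simp add: x_def mult_right_mono)
  have x_in: "x k \<in> {p..q}" if "k \<le> n" for k
    using x_mono[of 0 k] x_mono[of k n] that x_0 x_n by simp
  have on_grid: "antimono_on {..n} (\<lambda>k. \<phi> (x k))" if "antimono_on {p..q} \<phi>" for \<phi> :: "real \<Rightarrow> real"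
    using that x_in x_mono by (auto intro!: monotone_onI simp: monotone_on_def)
  have grid_bounds: "h * (\<Sum>k<n. \<phi> (x (Suc k))) \<le> integral {p..q} \<phi>
      \<and> integral {p..q} \<phi> \<le> h * (\<Sum>k<n. \<phi> (x k))" if "antimono_on {p..q} \<phi>" for \<phi>
    using antimono_integral_grid_bounds[of p n h \<phi>] that x_n \<open>h > 0\<close> by (simp add: x_def)
  have "- F (x 0) * (G (x 0) - G (x n) + E (x 0))
      \<le> (\<Sum>k<n. G (x (Suc k)) * F (x (Suc k)) - E (x k) * F (x k))"
  proof (rule sum_envelope_products_lower_bound[where D = "\<lambda>k. D (x k)"])
    show "0 < c * h" using \<open>c > 0\<close> \<open>h > 0\<close> by simp
    show "D (x 0) = 0" using D(1) x_0 by simp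
    show "antimono_on {..n} (\<lambda>k. F (x k))" "antimono_on {..n} (\<lambda>k. G (x k))"
      using on_grid F(1) G(1) by blast+
    fix k
    show "k \<le> n \<Longrightarrow> 0 \<le> F (x k)" "k \<le> n \<Longrightarrow> 0 \<le> E (x k)" "k \<le> n \<Longrightarrow> 0 \<le> D (x k)"
      using F(2) E(2) D(2) x_in by blast+
    show "k < n \<Longrightarrow> D (x (Suc k)) - D (x k) \<le> c * h * (G (x k) - E (x (Suc k)))"
      using envelope[OF x_in x_in x_mono, of k "Suc k"] by (simp add: x_def algebra_simps)
  qed
  then have "h * (- F p * (G p - G q + E p))
      \<le> h * ((\<Sum>k<n. G (x (Suc k)) * F (x (Suc k))) - (\<Sum>k<n. E (x k) * F (x k)))"
    using \<open>h > 0\<close> x_0 x_n by (intro mult_left_mono) (simp_all add: sum_subtractf)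
  then have "- h * (F p * (G p - G q + E p))
      \<le> h * (\<Sum>k<n. G (x (Suc k)) * F (x (Suc k))) - h * (\<Sum>k<n. E (x k) * F (x k))"
    by (simp add: right_diff_distrib)
  moreover have "h * (\<Sum>k<n. G (x (Suc k)) * F (x (Suc k))) \<le> integral {p..q} (\<lambda>x. G x * F x)"
    using grid_bounds[OF antimono_on_mult_nonneg[OF G(1) F(1) G(2) F(2)]] by simp
  moreover have "integral {p..q} (\<lambda>x. E x * F x) \<le> h * (\<Sum>k<n. E (x k) * F (x k))"
    using grid_bounds[OF antimono_on_mult_nonneg[OF E(1) F(1) E(2) F(2)]] by simp
  ultimately show ?thesis
    by (simp add: h_def)
qed

lemma integral_le_of_envelope:
  "integral {p..q} (\<lambda>x. E x * F x) \<le> integral {p..q} (\<lambda>x. G x * F x)"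
proof -
  have "integral {p..q} (\<lambda>x. E x * F x) - integral {p..q} (\<lambda>x. G x * F x) \<le> 0"
    using integral_envelope_gap_le
    by (intro LIMSEQ_le_const[OF lim_const_over_n[of "(q - p) * (F p * (G p - G q + E p))"]]
        exI[of _ 1]) auto
  then show ?thesis by simp
qed

end

lemma continuous_on_pi_of:
  assumes "continuous_on ({tlo..thi} \<times> {0..ebar} \<times> {0..ebar}) (\<lambda>(\<theta>, e, et). tpi \<theta> e et)"
    and "\<theta> \<in> {tlo..thi}"
  shows "continuous_on {0..ebar} (pi_of tpi \<theta>)"
proof -
  have "continuous_on {0..ebar} ((\<lambda>(\<theta>, e, et). tpi \<theta> e et) \<circ> (\<lambda>e. (\<theta>, e, e)))"
    by (rule continuous_on_compose[OF _ continuous_on_subset[OF assms(1)]])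
       (use assms(2) in \<open>auto intro!: continuous_intros\<close>)
  then show ?thesis
    by (simp add: o_def pi_of_def[abs_def])
qed

lemma belief_compatible_subset: "belief_compatible ebar d \<subseteq> {0..ebar}"
  by (auto simp: belief_compatible_def)

lemma top_belief_compatible: "0 \<le> ebar \<Longrightarrow> ebar \<in> belief_compatible ebar d"
  by (auto simp: belief_compatible_def)

lemma pi_d_attained:
  assumes "d \<in> policies tpi tlo thi ebar" "\<theta> \<in> {tlo..thi}"
  obtains e where "e \<in> belief_compatible ebar d" "pi_d tpi ebar d \<theta> = pi_of tpi \<theta> e"
    "\<And>e'. e' \<in> belief_compatible ebar d \<Longrightarrow> pi_of tpi \<theta> e' \<le> pi_of tpi \<theta> e"
proof -
  obtain e where e: "e \<in> belief_compatible ebar d"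
    "\<forall>e'\<in>belief_compatible ebar d. pi_of tpi \<theta> e' \<le> pi_of tpi \<theta> e"
    using assms unfolding policies_def by blast
  moreover have "pi_d tpi ebar d \<theta> = pi_of tpi \<theta> e"
    unfolding pi_d_def by (rule cSup_eq_maximum) (use e in auto)
  ultimately show thesis
    using that by blast
qed

lemma pi_of_le_pi_d:
  assumes "d \<in> policies tpi tlo thi ebar" "\<theta> \<in> {tlo..thi}" "e \<in> belief_compatible ebar d"
  shows "pi_of tpi \<theta> e \<le> pi_d tpi ebar d \<theta>"
  using pi_d_attained[OF assms(1,2)] assms(3) by metis

lemma ball_reflect_real: "(\<forall>\<theta>\<in>{- b..- a}. P \<theta>) \<longleftrightarrow> (\<forall>\<theta>\<in>{a..b::real}. P (- \<theta>))"
  by (metis atLeastAtMost_iff minus_minus neg_le_iff_le)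

lemma pi_of_reflect: "pi_of (\<lambda>\<theta>. tpi (- \<theta>)) \<theta> = pi_of tpi (- \<theta>)"
  by (simp add: pi_of_def fun_eq_iff)

lemma e_low_reflect: "e_low (\<lambda>\<theta>. tpi (- \<theta>)) ebar \<theta> = e_low tpi ebar (- \<theta>)"
  by (simp add: e_low_def pi_of_reflect)

lemma gamma_d_reflect: "gamma_d (\<lambda>\<theta>. tpi (- \<theta>)) ebar d \<theta> = gamma_d tpi ebar d (- \<theta>)"
  by (simp add: gamma_d_def pi_d_def pi_of_reflect)

lemma policies_reflect:
  "policies (\<lambda>\<theta>. tpi (- \<theta>)) (- thi) (- tlo) ebar = policies tpi tlo thi ebar"
  by (simp add: policies_def pi_of_reflect ball_reflect_real)

lemma full_disclosure_reflect:
  "full_disclosure (\<lambda>\<theta>. tpi (- \<theta>)) (- thi) (- tlo) ebar d = full_disclosure tpi tlo thi ebar d"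
  by (simp add: full_disclosure_def pi_of_reflect ball_reflect_real)

lemma Emission_reflect:
  "Emission (\<lambda>\<theta>. tpi (- \<theta>)) (- thi) (- tlo) ebar (\<lambda>\<theta>. f (- \<theta>)) d = Emission tpi tlo thi ebar f d"
  unfolding Emission_def gamma_d_reflect
  by (rule Henstock_Kurzweil_Integration.integral_reflect_real)

lemma pareto_frontier_eq_dominant_point:
  assumes "dF \<in> policies tpi tlo thi ebar"
    and dominant: "\<And>d. d \<in> policies tpi tlo thi ebar \<Longrightarrow>
      Profit tpi tlo thi ebar f d \<le> Profit tpi tlo thi ebar f dF \<and>
      Emission tpi tlo thi ebar f dF \<le> Emission tpi tlo thi ebar f d"
  shows "{(Emission tpi tlo thi ebar f d, Profit tpi tlo thi ebar f d) | d.
            pareto_efficient tpi tlo thi ebar f d}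
         = {(Emission tpi tlo thi ebar f dF, Profit tpi tlo thi ebar f dF)}"
proof -
  have "pareto_efficient tpi tlo thi ebar f dF"
    unfolding pareto_efficient_def using assms by force
  moreover have "Emission tpi tlo thi ebar f d = Emission tpi tlo thi ebar f dF \<and>
      Profit tpi tlo thi ebar f d = Profit tpi tlo thi ebar f dF"
    if "pareto_efficient tpi tlo thi ebar f d" for d
    using that assms dominant[of d] unfolding pareto_efficient_def by force
  ultimately show ?thesis
    by blast
qed

locale linear_profit_model =
  fixes tpi :: "real \<Rightarrow> real \<Rightarrow> real \<Rightarrow> real" and tlo thi ebar a b :: real
    and pi0 :: "real \<Rightarrow> real"
  assumes ebar_pos: "0 < ebar"
    and pi_continuous: "\<And>\<theta>. \<theta> \<in> {tlo..thi} \<Longrightarrow> continuous_on {0..ebar} (pi_of tpi \<theta>)"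
    and pi_strictly_concave: "\<And>\<theta> x y t. \<theta> \<in> {tlo..thi} \<Longrightarrow> x \<in> {0..ebar} \<Longrightarrow> y \<in> {0..ebar} \<Longrightarrow>
      x \<noteq> y \<Longrightarrow> 0 < t \<Longrightarrow> t < 1 \<Longrightarrow>
      t * pi_of tpi \<theta> x + (1 - t) * pi_of tpi \<theta> y < pi_of tpi \<theta> (t * x + (1 - t) * y)"
    and pi_linear_in_type: "\<And>\<theta> e. \<theta> \<in> {tlo..thi} \<Longrightarrow> e \<in> {0..ebar} \<Longrightarrow>
      pi_of tpi \<theta> e = pi0 e - \<theta> * (a * e + b)"
begin

abbreviation "\<pi> \<equiv> pi_of tpi"
abbreviation "\<pi>\<^sub>d \<equiv> pi_d tpi ebar"
abbreviation "\<gamma>\<^sub>d \<equiv> gamma_d tpi ebar"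
abbreviation "\<D> \<equiv> policies tpi tlo thi ebar"

lemma linear_profit_model_reflect: "linear_profit_model (\<lambda>\<theta>. tpi (- \<theta>)) (- thi) (- tlo) ebar (- a) (- b) pi0"
proof
  fix \<theta> assume "\<theta> \<in> {- thi..- tlo}"
  then have \<theta>: "- \<theta> \<in> {tlo..thi}" by auto
  show "continuous_on {0..ebar} (pi_of (\<lambda>\<theta>. tpi (- \<theta>)) \<theta>)"
    using pi_continuous[OF \<theta>] by (simp add: pi_of_reflect)
  show "t * pi_of (\<lambda>\<theta>. tpi (- \<theta>)) \<theta> x + (1 - t) * pi_of (\<lambda>\<theta>. tpi (- \<theta>)) \<theta> y
      < pi_of (\<lambda>\<theta>. tpi (- \<theta>)) \<theta> (t * x + (1 - t) * y)"
    if "x \<in> {0..ebar}" "y \<in> {0..ebar}" "x \<noteq> y" "0 < t" "t < 1" for x y t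
    using pi_strictly_concave[OF \<theta> that] by (simp add: pi_of_reflect)
  show "pi_of (\<lambda>\<theta>. tpi (- \<theta>)) \<theta> e = pi0 e - \<theta> * (- a * e + - b)" if "e \<in> {0..ebar}" for e
    using pi_linear_in_type[OF \<theta> that] by (simp add: pi_of_reflect algebra_simps)
qed (rule ebar_pos)

lemma pi_of_between_gt_min:
  assumes "\<theta> \<in> {tlo..thi}" "x \<in> {0..ebar}" "z \<in> {0..ebar}" "x < y" "y < z"
  shows "min (\<pi> \<theta> x) (\<pi> \<theta> z) < \<pi> \<theta> y"
proof -
  define t where "t = (z - y) / (z - x)"
  have t: "0 < t" "t < 1"
    using assms(4,5) by (auto simp: t_def field_simps)
  have "t * (z - x) = z - y"
    using assms(4,5) by (simp add: t_def)
  then have y_eq: "y = t * x + (1 - t) * z"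
    by (simp add: algebra_simps)
  have "t * min (\<pi> \<theta> x) (\<pi> \<theta> z) + (1 - t) * min (\<pi> \<theta> x) (\<pi> \<theta> z)
      \<le> t * \<pi> \<theta> x + (1 - t) * \<pi> \<theta> z"
    using t by (intro add_mono mult_left_mono) auto
  also have "\<dots> < \<pi> \<theta> y"
    unfolding y_eq using assms t by (intro pi_strictly_concave) auto
  finally show ?thesis
    by (simp add: algebra_simps)
qed

lemma gamma_d_maximizer:
  assumes d: "d \<in> \<D>" and \<theta>: "\<theta> \<in> {tlo..thi}"
  shows "\<gamma>\<^sub>d d \<theta> \<in> belief_compatible ebar d \<and> \<pi> \<theta> (\<gamma>\<^sub>d d \<theta>) = \<pi>\<^sub>d d \<theta>"
proof -
  define M where "M = {e \<in> belief_compatible ebar d. \<pi> \<theta> e = \<pi>\<^sub>d d \<theta>}"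
  have M_sub: "M \<subseteq> {0..ebar}"
    using belief_compatible_subset by (auto simp: M_def)
  obtain m where m: "m \<in> M"
    using pi_d_attained[OF d \<theta>] unfolding M_def by (metis (mono_tags, lifting) mem_Collect_eq)
  have "\<exists>l\<in>M. \<forall>y\<in>M. l \<le> y"
  proof (cases "\<forall>y\<in>M. m \<le> y")
    case False
    then obtain m' where m': "m' \<in> M" "m' < m" by force
    \<comment> \<open>strict concavity rules out three maximizers \<open>y < m' < m\<close>\<close>
    have "m' \<le> y" if "y \<in> M" for y
      using pi_of_between_gt_min[OF \<theta>, of y m m'] that m m' M_sub
      by (force simp: M_def not_le)
    with m' show ?thesis by blast
  qed (use m in blast)
  then obtain l where "l \<in> M" "\<forall>y\<in>M. l \<le> y" by blast
  moreover from this have "\<gamma>\<^sub>d d \<theta> = l"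
    unfolding gamma_d_def by (intro Least_equality) (auto simp: M_def)
  ultimately show ?thesis
    by (simp add: M_def)
qed

lemma gamma_d_range: "d \<in> \<D> \<Longrightarrow> \<theta> \<in> {tlo..thi} \<Longrightarrow> \<gamma>\<^sub>d d \<theta> \<in> {0..ebar}"
  using gamma_d_maximizer belief_compatible_subset by blast

lemma pi_d_envelope:
  assumes d: "d \<in> \<D>" and x: "x \<in> {tlo..thi}" and y: "y \<in> {tlo..thi}"
  shows "\<pi>\<^sub>d d x - \<pi>\<^sub>d d y \<le> (y - x) * (a * \<gamma>\<^sub>d d x + b)"
proof -
  have \<gamma>: "\<gamma>\<^sub>d d x \<in> {0..ebar}"
    by (rule gamma_d_range[OF d x])
  have "\<pi> y (\<gamma>\<^sub>d d x) \<le> \<pi>\<^sub>d d y"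
    using pi_of_le_pi_d[OF d y] gamma_d_maximizer[OF d x] by blast
  then have "\<pi>\<^sub>d d x - \<pi>\<^sub>d d y \<le> \<pi> x (\<gamma>\<^sub>d d x) - \<pi> y (\<gamma>\<^sub>d d x)"
    using gamma_d_maximizer[OF d x] by simp
  also have "\<dots> = (y - x) * (a * \<gamma>\<^sub>d d x + b)"
    using pi_linear_in_type[OF x \<gamma>] pi_linear_in_type[OF y \<gamma>] by (simp add: algebra_simps)
  finally show ?thesis .
qed

lemma gamma_d_antimono:
  assumes "a > 0" "d \<in> \<D>"
  shows "antimono_on {tlo..thi} (\<gamma>\<^sub>d d)"
proof (rule monotone_onI)
  fix x y assume xy: "x \<in> {tlo..thi}" "y \<in> {tlo..thi}" "x \<le> y"
  have "0 \<le> (y - x) * (a * \<gamma>\<^sub>d d x + b) + (x - y) * (a * \<gamma>\<^sub>d d y + b)"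
    using pi_d_envelope[OF assms(2), of x y] pi_d_envelope[OF assms(2), of y x] xy by linarith
  then have "0 \<le> (y - x) * (a * (\<gamma>\<^sub>d d x - \<gamma>\<^sub>d d y))"
    by (simp add: algebra_simps)
  then show "\<gamma>\<^sub>d d y \<le> \<gamma>\<^sub>d d x"
    using xy assms(1) by (cases "x = y") (auto simp: zero_le_mult_iff)
qed

lemma continuous_on_pi_d:
  assumes d: "d \<in> \<D>"
  shows "continuous_on {tlo..thi} (\<pi>\<^sub>d d)"
proof -
  define L where "L = \<bar>a\<bar> * ebar + \<bar>b\<bar>"
  have "\<pi>\<^sub>d d x - \<pi>\<^sub>d d y \<le> L * \<bar>x - y\<bar>" if "x \<in> {tlo..thi}" "y \<in> {tlo..thi}" for x y
  proof -
    have "\<bar>a * \<gamma>\<^sub>d d x\<bar> \<le> \<bar>a\<bar> * ebar"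
      using gamma_d_range[OF d that(1)] by (simp add: abs_mult mult_left_mono)
    then have "\<bar>a * \<gamma>\<^sub>d d x + b\<bar> \<le> L"
      unfolding L_def by linarith
    then have "(y - x) * (a * \<gamma>\<^sub>d d x + b) \<le> \<bar>x - y\<bar> * L"
      by (metis abs_ge_self abs_minus_commute abs_mult abs_ge_zero mult_left_mono order_trans)
    then show ?thesis
      using pi_d_envelope[OF d that] by (simp add: mult.commute)
  qed
  note one_sided = this
  have "L-lipschitz_on {tlo..thi} (\<pi>\<^sub>d d)"
  proof (rule lipschitz_onI)
    fix x y assume "x \<in> {tlo..thi}" "y \<in> {tlo..thi}"
    then show "dist (\<pi>\<^sub>d d x) (\<pi>\<^sub>d d y) \<le> L * dist x y"
      using one_sided[of x y] one_sided[of y x]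
      by (simp add: dist_real_def abs_le_iff abs_minus_commute)
  qed (use ebar_pos in \<open>simp add: L_def\<close>)
  then show ?thesis
    by (rule lipschitz_on_continuous_on)
qed

lemma full_disclosure_attains_max:
  assumes "full_disclosure tpi tlo thi ebar dF" "\<theta> \<in> {tlo..thi}"
  obtains m where "m \<in> belief_compatible ebar dF" "\<And>e. e \<in> {0..ebar} \<Longrightarrow> \<pi> \<theta> e \<le> \<pi> \<theta> m"
proof -
  obtain m where m: "m \<in> {0..ebar}" "\<forall>e\<in>{0..ebar}. \<pi> \<theta> e \<le> \<pi> \<theta> m"
    using continuous_attains_sup[OF compact_Icc _ pi_continuous[OF assms(2)]] ebar_pos by auto
  then have "\<forall>e'\<in>{0..ebar}. dF e' = dF m \<longrightarrow> e' = m"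
    using assms unfolding full_disclosure_def by blast
  then have "m \<in> belief_compatible ebar dF"
    using m(1) unfolding belief_compatible_def by auto
  with m(2) that show thesis by blast
qed

lemma full_disclosure_in_policies:
  assumes "full_disclosure tpi tlo thi ebar dF"
  shows "dF \<in> \<D>"
  unfolding policies_def
proof (intro CollectI conjI ballI)
  show "dF ` {0..ebar} \<subseteq> {0..ebar}"
    using assms unfolding full_disclosure_def by blast
  fix \<theta> assume "\<theta> \<in> {tlo..thi}"
  then obtain m where "m \<in> belief_compatible ebar dF" "\<And>e. e \<in> {0..ebar} \<Longrightarrow> \<pi> \<theta> e \<le> \<pi> \<theta> m"
    using full_disclosure_attains_max[OF assms] by blast
  then show "\<exists>e\<in>belief_compatible ebar dF. \<forall>e'\<in>belief_compatible ebar dF. \<pi> \<theta> e' \<le> \<pi> \<theta> e"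
    using belief_compatible_subset by blast
qed

lemma pi_d_le_full_disclosure:
  assumes dF: "full_disclosure tpi tlo thi ebar dF" and d: "d \<in> \<D>" and \<theta>: "\<theta> \<in> {tlo..thi}"
  shows "\<pi>\<^sub>d d \<theta> \<le> \<pi>\<^sub>d dF \<theta>"
proof -
  obtain e where e: "e \<in> belief_compatible ebar d" "\<pi>\<^sub>d d \<theta> = \<pi> \<theta> e"
    using pi_d_attained[OF d \<theta>] by blast
  obtain m where m: "m \<in> belief_compatible ebar dF" "\<And>e. e \<in> {0..ebar} \<Longrightarrow> \<pi> \<theta> e \<le> \<pi> \<theta> m"
    using full_disclosure_attains_max[OF dF \<theta>] by blast
  have "\<pi> \<theta> e \<le> \<pi> \<theta> m"
    using m(2) e(1) belief_compatible_subset by blast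
  also have "\<dots> \<le> \<pi>\<^sub>d dF \<theta>"
    by (rule pi_of_le_pi_d[OF full_disclosure_in_policies[OF dF] \<theta> m(1)])
  finally show ?thesis
    using e(2) by simp
qed

lemma pi_of_less_top_if_e_low_top:
  assumes \<theta>: "\<theta> \<in> {tlo..thi}" and e_low: "e_low tpi ebar \<theta> = ebar" and e: "e \<in> {0..<ebar}"
  shows "\<pi> \<theta> e < \<pi> \<theta> ebar"
proof (rule ccontr)
  assume "\<not> \<pi> \<theta> e < \<pi> \<theta> ebar"
  define A where "A = {0..ebar} \<inter> \<pi> \<theta> -` {\<pi> \<theta> ebar..}"
  have "closed A"
    unfolding A_def by (rule continuous_closed_preimage[OF pi_continuous[OF \<theta>]]) auto
  then have "compact A"
    by (auto simp: A_def compact_eq_bounded_closed intro: bounded_subset[OF bounded_closed_interval])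
  moreover have "ebar \<in> A"
    using ebar_pos by (simp add: A_def)
  ultimately obtain l where l: "l \<in> A" "\<And>y. y \<in> A \<Longrightarrow> l \<le> y"
    using compact_attains_inf[of A] by blast
  have "e_low tpi ebar \<theta> = l"
    unfolding e_low_def by (rule Least_equality) (use l in \<open>auto simp: A_def\<close>)
  moreover have "l \<le> e"
    using l(2) e \<open>\<not> \<pi> \<theta> e < \<pi> \<theta> ebar\<close> by (simp add: A_def)
  ultimately show False
    using e e_low by simp
qed

lemma gamma_d_eq_top:
  assumes \<theta>: "\<theta> \<in> {tlo..thi}" and e_low: "e_low tpi ebar \<theta> = ebar" and d: "d \<in> \<D>"
  shows "\<gamma>\<^sub>d d \<theta> = ebar" "\<pi>\<^sub>d d \<theta> = \<pi> \<theta> ebar"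
proof -
  have "\<pi> \<theta> ebar \<le> \<pi> \<theta> (\<gamma>\<^sub>d d \<theta>)"
    using pi_of_le_pi_d[OF d \<theta> top_belief_compatible] gamma_d_maximizer[OF d \<theta>] ebar_pos by simp
  then show "\<gamma>\<^sub>d d \<theta> = ebar"
    using pi_of_less_top_if_e_low_top[OF \<theta> e_low] gamma_d_range[OF d \<theta>] by force
  then show "\<pi>\<^sub>d d \<theta> = \<pi> \<theta> ebar"
    using gamma_d_maximizer[OF d \<theta>] by simp
qed

lemma Profit_le_full_disclosure:
  assumes dF: "full_disclosure tpi tlo thi ebar dF" and d: "d \<in> \<D>"
    and f: "\<And>\<theta>. \<theta> \<in> {tlo..thi} \<Longrightarrow> 0 \<le> f \<theta>" "continuous_on {tlo..thi} f"
  shows "Profit tpi tlo thi ebar f d \<le> Profit tpi tlo thi ebar f dF"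
  unfolding Profit_def
proof (rule integral_le)
  have "(\<lambda>\<theta>. \<pi>\<^sub>d d' \<theta> * f \<theta>) integrable_on {tlo..thi}" if "d' \<in> \<D>" for d'
    by (intro integrable_continuous_interval continuous_on_mult continuous_on_pi_d that f(2))
  then show "(\<lambda>\<theta>. \<pi>\<^sub>d d \<theta> * f \<theta>) integrable_on {tlo..thi}"
    "(\<lambda>\<theta>. \<pi>\<^sub>d dF \<theta> * f \<theta>) integrable_on {tlo..thi}"
    using d full_disclosure_in_policies[OF dF] by blast+
  fix \<theta> assume "\<theta> \<in> {tlo..thi}"
  then show "\<pi>\<^sub>d d \<theta> * f \<theta> \<le> \<pi>\<^sub>d dF \<theta> * f \<theta>"
    using pi_d_le_full_disclosure[OF dF d] f(1) by (intro mult_right_mono)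
qed

lemma Emission_split_at_top_region:
  assumes d: "d \<in> \<D>" and t: "t \<in> {tlo..thi}" "\<forall>\<theta>\<in>{tlo..t}. e_low tpi ebar \<theta> = ebar"
    and high: "(\<lambda>\<theta>. \<gamma>\<^sub>d d \<theta> * f \<theta>) integrable_on {t..thi}"
    and f: "continuous_on {tlo..thi} f"
  shows "Emission tpi tlo thi ebar f d
           = integral {tlo..t} (\<lambda>\<theta>. ebar * f \<theta>) + integral {t..thi} (\<lambda>\<theta>. \<gamma>\<^sub>d d \<theta> * f \<theta>)"
proof -
  have top: "\<gamma>\<^sub>d d \<theta> * f \<theta> = ebar * f \<theta>" if "\<theta> \<in> {tlo..t}" for \<theta>
    using gamma_d_eq_top(1)[OF _ _ d] t that by auto
  have "(\<lambda>\<theta>. ebar * f \<theta>) integrable_on {tlo..t}"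
    using t(1) by (intro integrable_continuous_interval continuous_intros continuous_on_subset[OF f]) auto
  then have low: "(\<lambda>\<theta>. \<gamma>\<^sub>d d \<theta> * f \<theta>) integrable_on {tlo..t}"
    by (rule integrable_eq) (simp add: top)
  have "Emission tpi tlo thi ebar f d
      = integral {tlo..t} (\<lambda>\<theta>. \<gamma>\<^sub>d d \<theta> * f \<theta>) + integral {t..thi} (\<lambda>\<theta>. \<gamma>\<^sub>d d \<theta> * f \<theta>)"
    unfolding Emission_def using t(1)
    by (intro Henstock_Kurzweil_Integration.integral_combine[symmetric]
        Henstock_Kurzweil_Integration.integrable_combine[OF _ _ low high]) auto
  also have "integral {tlo..t} (\<lambda>\<theta>. \<gamma>\<^sub>d d \<theta> * f \<theta>) = integral {tlo..t} (\<lambda>\<theta>. ebar * f \<theta>)"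
    using top by (rule integral_cong)
  finally show ?thesis .
qed

lemma Emission_full_disclosure_le:
  assumes "a > 0" and dF: "full_disclosure tpi tlo thi ebar dF" and d: "d \<in> \<D>"
    and f: "\<And>\<theta>. \<theta> \<in> {tlo..thi} \<Longrightarrow> 0 \<le> f \<theta>" "continuous_on {tlo..thi} f"
    and t: "t \<in> {tlo..thi}" "\<forall>\<theta>\<in>{tlo..t}. e_low tpi ebar \<theta> = ebar"
    and f_antimono: "antimono_on {t..thi} f"
  shows "Emission tpi tlo thi ebar f dF \<le> Emission tpi tlo thi ebar f d"
proof -
  have dF_pol: "dF \<in> \<D>"
    by (rule full_disclosure_in_policies[OF dF])
  have sub: "{t..thi} \<subseteq> {tlo..thi}"
    using t(1) by auto
  have \<gamma>_antimono: "antimono_on {t..thi} (\<gamma>\<^sub>d d')" if "d' \<in> \<D>" for d'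
    using monotone_on_subset[OF gamma_d_antimono[OF \<open>a > 0\<close> that] sub] .
  have \<gamma>_nonneg: "0 \<le> \<gamma>\<^sub>d d' \<theta>" if "d' \<in> \<D>" "\<theta> \<in> {t..thi}" for d' \<theta>
    using gamma_d_range[OF that(1)] sub that(2) by auto
  have split: "Emission tpi tlo thi ebar f d'
      = integral {tlo..t} (\<lambda>\<theta>. ebar * f \<theta>) + integral {t..thi} (\<lambda>\<theta>. \<gamma>\<^sub>d d' \<theta> * f \<theta>)"
    if "d' \<in> \<D>" for d'
    using f sub \<gamma>_nonneg[OF that]
    by (intro Emission_split_at_top_region that t f(2) integrable_on_antimono_on
        antimono_on_mult_nonneg \<gamma>_antimono f_antimono) auto
  have "integral {t..thi} (\<lambda>\<theta>. \<gamma>\<^sub>d dF \<theta> * f \<theta>) \<le> integral {t..thi} (\<lambda>\<theta>. \<gamma>\<^sub>d d \<theta> * f \<theta>)"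
  proof (rule integral_le_of_envelope[where c = a and D = "\<lambda>\<theta>. \<pi>\<^sub>d dF \<theta> - \<pi>\<^sub>d d \<theta>"])
    show "\<pi>\<^sub>d dF t - \<pi>\<^sub>d d t = 0"
      using gamma_d_eq_top(2)[OF t(1) _ d] gamma_d_eq_top(2)[OF t(1) _ dF_pol] t by auto
    fix x y assume xy: "x \<in> {t..thi}" "y \<in> {t..thi}" "x \<le> y"
    show "(\<pi>\<^sub>d dF y - \<pi>\<^sub>d d y) - (\<pi>\<^sub>d dF x - \<pi>\<^sub>d d x) \<le> a * (y - x) * (\<gamma>\<^sub>d d x - \<gamma>\<^sub>d dF y)"
      using pi_d_envelope[OF d, of x y] pi_d_envelope[OF dF_pol, of y x] xy sub
      by (auto simp: algebra_simps)
  qed (use \<open>a > 0\<close> t(1) f sub f_antimono \<gamma>_antimono \<gamma>_nonneg d dF_pol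
         pi_d_le_full_disclosure[OF dF d] in auto)
  then show ?thesis
    using split[OF d] split[OF dF_pol] by simp
qed

lemma Emission_full_disclosure_le_mirrored:
  assumes "a < 0" and dF: "full_disclosure tpi tlo thi ebar dF" and d: "d \<in> \<D>"
    and f: "\<And>\<theta>. \<theta> \<in> {tlo..thi} \<Longrightarrow> 0 \<le> f \<theta>" "continuous_on {tlo..thi} f"
    and t: "t \<in> {tlo..thi}" "\<forall>\<theta>\<in>{t..thi}. e_low tpi ebar \<theta> = ebar"
    and f_mono: "mono_on {tlo..t} f"
  shows "Emission tpi tlo thi ebar f dF \<le> Emission tpi tlo thi ebar f d"
proof -
  interpret reflected: linear_profit_model "\<lambda>\<theta>. tpi (- \<theta>)" "- thi" "- tlo" ebar "- a" "- b" pi0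
    by (rule linear_profit_model_reflect)
  have "Emission (\<lambda>\<theta>. tpi (- \<theta>)) (- thi) (- tlo) ebar (\<lambda>\<theta>. f (- \<theta>)) dF
      \<le> Emission (\<lambda>\<theta>. tpi (- \<theta>)) (- thi) (- tlo) ebar (\<lambda>\<theta>. f (- \<theta>)) d"
  proof (rule reflected.Emission_full_disclosure_le[where t = "- t"])
    show "continuous_on {- thi..- tlo} (\<lambda>\<theta>. f (- \<theta>))"
      by (intro continuous_on_compose2[OF f(2)] continuous_intros) auto
    show "antimono_on {- t..- tlo} (\<lambda>\<theta>. f (- \<theta>))"
      using f_mono by (auto intro!: monotone_onI simp: monotone_on_def)
    show "\<forall>\<theta>\<in>{- thi..- t}. e_low (\<lambda>\<theta>. tpi (- \<theta>)) ebar \<theta> = ebar"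
      using t(2) by (simp add: e_low_reflect)
  qed (use \<open>a < 0\<close> dF d f t(1) in \<open>auto simp: full_disclosure_reflect policies_reflect\<close>)
  then show ?thesis
    by (simp only: Emission_reflect)
qed

end

theorem proposition6:
  fixes tpi :: "real \<Rightarrow> real \<Rightarrow> real \<Rightarrow> real"
    and tlo thi ebar :: real
    and f :: "real \<Rightarrow> real"
    and pi0 :: "real \<Rightarrow> real"
    and a b t_tri :: real
  assumes theta_interval: "tlo < thi"
    and ebar_pos: "ebar > 0"
    (* density f = F' on Theta, continuous *)
    and f_nonneg: "\<forall>\<theta>\<in>{tlo..thi}. f \<theta> \<ge> 0"
    and f_density: "(f has_integral 1) {tlo..thi}"
    and f_cont: "continuous_on {tlo..thi} f"
    (* standing assumptions on tilde pi *)
    and tpi_cont: "continuous_on ({tlo..thi} \<times> {0..ebar} \<times> {0..ebar})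
                     (\<lambda>(\<theta>, e, et). tpi \<theta> e et)"
    and tpi_C2: "C2_on ({tlo<..<thi} \<times> {0<..<ebar} \<times> {0<..<ebar})
                     (\<lambda>(\<theta>, e, et). tpi \<theta> e et)"
    and tpi_incr: "\<forall>\<theta>\<in>{tlo..thi}. \<forall>et\<in>{0..ebar}. \<forall>e1\<in>{0..ebar}. \<forall>e2\<in>{0..ebar}.
                     e1 < e2 \<longrightarrow> tpi \<theta> e1 et < tpi \<theta> e2 et"
    and tpi_decr: "\<forall>\<theta>\<in>{tlo..thi}. \<forall>e\<in>{0..ebar}. \<forall>et1\<in>{0..ebar}. \<forall>et2\<in>{0..ebar}.
                     et1 < et2 \<longrightarrow> tpi \<theta> e et2 < tpi \<theta> e et1"
    and pi_strict_concave: "\<forall>\<theta>\<in>{tlo..thi}. \<forall>x\<in>{0..ebar}. \<forall>y\<in>{0..ebar}. \<forall>t::real.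
                     x \<noteq> y \<longrightarrow> 0 < t \<longrightarrow> t < 1 \<longrightarrow>
                     t * pi_of tpi \<theta> x + (1 - t) * pi_of tpi \<theta> y
                       < pi_of tpi \<theta> (t * x + (1 - t) * y)"
    and pi_end: "\<forall>\<theta>\<in>{tlo..thi}. pi_of tpi \<theta> 0 < pi_of tpi \<theta> ebar"
    (* specific form of pi *)
    and pi_form: "\<forall>\<theta>\<in>{tlo..thi}. \<forall>e\<in>{0..ebar}. pi_of tpi \<theta> e = pi0 e - \<theta> * (a * e + b)"
    (* f continuously differentiable on the interior of Theta *)
    and f_C1: "\<exists>f'. (\<forall>\<theta>\<in>{tlo<..<thi}. (f has_real_derivative f' \<theta>) (at \<theta>)) \<and>
                    continuous_on {tlo<..<thi} f'"
    and t_tri_in: "t_tri \<in> {tlo..thi}"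
    and cases: "(a > 0 \<and> (\<forall>\<theta>\<in>{tlo..t_tri}. e_low tpi ebar \<theta> = ebar) \<and>
                   (\<forall>x\<in>{t_tri..thi}. \<forall>y\<in>{t_tri..thi}. x \<le> y \<longrightarrow> f y \<le> f x))
              \<or> (a < 0 \<and> (\<forall>\<theta>\<in>{t_tri..thi}. e_low tpi ebar \<theta> = ebar) \<and>
                   (\<forall>x\<in>{tlo..t_tri}. \<forall>y\<in>{tlo..t_tri}. x \<le> y \<longrightarrow> f x \<le> f y))"
  shows "\<forall>dF. full_disclosure tpi tlo thi ebar dF \<longrightarrow>
           {(Emission tpi tlo thi ebar f d, Profit tpi tlo thi ebar f d) | d.
               pareto_efficient tpi tlo thi ebar f d}
           = {(Emission tpi tlo thi ebar f dF, Profit tpi tlo thi ebar f dF)}"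
proof -
  interpret linear_profit_model tpi tlo thi ebar a b pi0
    using ebar_pos continuous_on_pi_of[OF tpi_cont] pi_strict_concave pi_form
    by unfold_locales blast+
  have f: "\<And>\<theta>. \<theta> \<in> {tlo..thi} \<Longrightarrow> 0 \<le> f \<theta>" "continuous_on {tlo..thi} f"
    using f_nonneg f_cont by auto
  have Emission_le: "Emission tpi tlo thi ebar f dF \<le> Emission tpi tlo thi ebar f d"
    if dF: "full_disclosure tpi tlo thi ebar dF" and d: "d \<in> \<D>" for dF d
    using cases
  proof (elim disjE conjE)
    assume "a > 0" "\<forall>\<theta>\<in>{tlo..t_tri}. e_low tpi ebar \<theta> = ebar"
      "\<forall>x\<in>{t_tri..thi}. \<forall>y\<in>{t_tri..thi}. x \<le> y \<longrightarrow> f y \<le> f x"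
    then show ?thesis
      using Emission_full_disclosure_le[OF _ dF d f t_tri_in] by (simp add: monotone_on_def)
  next
    assume "a < 0" "\<forall>\<theta>\<in>{t_tri..thi}. e_low tpi ebar \<theta> = ebar"
      "\<forall>x\<in>{tlo..t_tri}. \<forall>y\<in>{tlo..t_tri}. x \<le> y \<longrightarrow> f x \<le> f y"
    then show ?thesis
      using Emission_full_disclosure_le_mirrored[OF _ dF d f t_tri_in] by (simp add: monotone_on_def)
  qed
  show ?thesis
    using full_disclosure_in_policies Profit_le_full_disclosure[OF _ _ f] Emission_le
    by (intro allI impI pareto_frontier_eq_dominant_point) auto
qed

end
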